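(* Let $n\geq 2$ and $0<\delta<1$. If $f:\mathbb{R}^n\rightarrow\mathbb{R}^n$ is quasiconformal and $\sup_{z\in S^{n-1}}\widetilde{H}_f(B(z,r))\leq\delta/40$ for some $r>0$, then $f(S^{n-1})$ is $(\delta,R)$-Reifenberg flat for some $R>0$.
   Context: For $\Omega\subset\mathbb{R}^n$, $H_f(\Omega)=\sup\{|f(x)-f(y)|/|f(x)-f(z)|: x,y,z\in\Omega,\ |x-y|\leq|x-z|\}$ and $\widetilde{H}_f(\Omega)=H_f(\Omega)-1$. For a closed $\Sigma\subset\mathbb{R}^n$, $\theta_\Sigma(x,t)=\frac1t\min_{L}\mathrm{HD}[\Sigma\cap B(x,t),(x+L)\cap B(x,t)]$, minimum over $(n-1)$-dimensional linear subspaces $L$, $\mathrm{HD}$ the Hausdorff distance. $\Sigma$ is $(\delta,R)$-Reifenberg flat if $\theta_\Sigma(x,t)\leq\delta$ for all $x\in\Sigma$ and $0<t\leq R$. *)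

theory Defs
  imports "HOL-Analysis.Analysis"
begin

text \<open>Three-point weak quasisymmetry constant H_f(Omega) (valued in ereal, may be infinite).
  Triples with x = z are excluded (0/0); for an injective map this is the only degenerate case.\<close>
definition H_const :: "('a::metric_space \<Rightarrow> 'b::metric_space) \<Rightarrow> 'a set \<Rightarrow> ereal" where
  "H_const f \<Omega> = (SUP p \<in> {(x, y, z). x \<in> \<Omega> \<and> y \<in> \<Omega> \<and> z \<in> \<Omega> \<and> x \<noteq> z \<and> dist x y \<le> dist x z}.
      (case p of (x, y, z) \<Rightarrow> ereal (dist (f x) (f y) / dist (f x) (f z))))"

definition H_tilde :: "('a::metric_space \<Rightarrow> 'b::metric_space) \<Rightarrow> 'a set \<Rightarrow> ereal" where
  "H_tilde f \<Omega> = H_const f \<Omega> - 1"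

definition hausdorff_dist :: "'a::metric_space set \<Rightarrow> 'a set \<Rightarrow> real" where
  "hausdorff_dist A B = max (SUP a \<in> A. infdist a B) (SUP b \<in> B. infdist b A)"

definition theta :: "(real ^ 'n) set \<Rightarrow> real ^ 'n \<Rightarrow> real \<Rightarrow> real" where
  "theta \<Sigma> x t = (1 / t) * (INF L \<in> {L. subspace L \<and> dim L = CARD('n) - 1}.
      hausdorff_dist (\<Sigma> \<inter> cball x t) ((\<lambda>v. x + v) ` L \<inter> cball x t))"

definition reifenberg_flat :: "real \<Rightarrow> real \<Rightarrow> (real ^ 'n) set \<Rightarrow> bool" where
  "reifenberg_flat \<delta> R \<Sigma> \<longleftrightarrow> closed \<Sigma> \<and>
     (\<forall>x \<in> \<Sigma>. \<forall>t. 0 < t \<and> t \<le> R \<longrightarrow> theta \<Sigma> x t \<le> \<delta>)"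

text \<open>Metric definition of quasiconformality (Vaisala): a homeomorphism of R^n whose
  linear dilatation H(x,f) = limsup_{r->0} L_f(x,r)/l_f(x,r) is bounded on R^n.\<close>
definition lin_dilatation :: "(real ^ 'n \<Rightarrow> real ^ 'n) \<Rightarrow> real ^ 'n \<Rightarrow> ereal" where
  "lin_dilatation f x = Limsup (at_right 0)
     (\<lambda>r. ereal (Sup {dist (f y) (f x) | y. dist y x = r} / Inf {dist (f y) (f x) | y. dist y x = r}))"

definition quasiconformal :: "(real ^ 'n \<Rightarrow> real ^ 'n) \<Rightarrow> bool" where
  "quasiconformal f \<longleftrightarrow> (\<exists>g. homeomorphism UNIV UNIV f g) \<and>
     (\<exists>K::real. \<forall>x. lin_dilatation f x \<le> ereal K)"

end

theory Submission
  imports Defs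
begin

text \<open>Fix \<open>x0\<close> on the sphere, a small \<open>s > 0\<close>, the points \<open>a = (1 + s) x0\<close>, \<open>b = (1 - s) x0\<close>
  and \<open>t = |f a - f b|\<close>. A point \<open>w\<close> of the unit ball is closer to \<open>b\<close> than to \<open>a\<close>, so by the
  three-point condition with constant \<open>1 + \<epsilon>\<close> its image lies, up to \<open>10 \<epsilon> t\<close>, on the \<open>f b\<close>-side
  of the bisecting hyperplane of \<open>f a\<close> and \<open>f b\<close>; points outside the ball lie on the \<open>f a\<close>-side.
  Near \<open>f x0\<close> the image of the sphere is therefore trapped in a thin slab, and since it separates
  the two faces of the slab it also passes close to every point of the hyperplane. Distances under
  \<open>f\<close> grow geometrically under doubling, which confines the relevant preimages to a ball of radius
  \<open>8 s\<close> around \<open>x0\<close>. Every small scale \<open>t\<close> is attained for some \<open>s\<close> by the intermediate value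
  theorem, and compactness of the sphere makes the bound on the scales uniform.\<close>

definition weakly_qs_on :: "('a::metric_space \<Rightarrow> 'b::metric_space) \<Rightarrow> 'a set \<Rightarrow> real \<Rightarrow> bool" where
  "weakly_qs_on f B H \<longleftrightarrow>
     (\<forall>x\<in>B. \<forall>y\<in>B. \<forall>z\<in>B. dist x y \<le> dist x z \<longrightarrow> dist (f x) (f y) \<le> H * dist (f x) (f z))"

lemma weakly_qs_onD:
  "weakly_qs_on f B H \<Longrightarrow> x \<in> B \<Longrightarrow> y \<in> B \<Longrightarrow> z \<in> B \<Longrightarrow> dist x y \<le> dist x z \<Longrightarrow>
    dist (f x) (f y) \<le> H * dist (f x) (f z)"
  unfolding weakly_qs_on_def by blast

lemma H_tilde_le_imp_weakly_qs_on:
  assumes "inj f" and "H_tilde f B \<le> ereal c"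
  shows "weakly_qs_on f B (1 + c)"
  unfolding weakly_qs_on_def
proof (intro ballI impI)
  fix x y z assume "x \<in> B" "y \<in> B" "z \<in> B" and xyz: "dist x y \<le> dist x z"
  show "dist (f x) (f y) \<le> (1 + c) * dist (f x) (f z)"
  proof (cases "x = z")
    case True
    then show ?thesis using xyz by simp
  next
    case False
    then have "(x, y, z) \<in> {(x, y, z). x \<in> B \<and> y \<in> B \<and> z \<in> B \<and> x \<noteq> z \<and> dist x y \<le> dist x z}"
      using \<open>x \<in> B\<close> \<open>y \<in> B\<close> \<open>z \<in> B\<close> xyz by simp
    then have "ereal (dist (f x) (f y) / dist (f x) (f z)) \<le> H_const f B"
      unfolding H_const_def by (rule SUP_upper2) simp
    then have "ereal (dist (f x) (f y) / dist (f x) (f z)) - 1 \<le> ereal c"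
      using assms(2) unfolding H_tilde_def by (metis ereal_minus_mono order.refl order_trans)
    then have "dist (f x) (f y) / dist (f x) (f z) \<le> 1 + c"
      by (simp add: one_ereal_def)
    moreover have "0 < dist (f x) (f z)"
      using False \<open>inj f\<close> by (auto dest: injD)
    ultimately show ?thesis by (simp add: divide_le_eq)
  qed
qed

lemma homeomorphism_hits_level_in_connected:
  fixes \<phi> :: "'a::topological_space \<Rightarrow> real"
  assumes hom: "homeomorphism UNIV UNIV f g" and "connected P" "f a \<in> P" "f b \<in> P"
    and "continuous_on UNIV \<phi>" "\<phi> a \<le> \<rho>" "\<rho> \<le> \<phi> b"
  obtains w where "\<phi> w = \<rho>" "f w \<in> P"
proof -
  have gf: "\<And>x. g (f x) = x" and fg: "\<And>y. f (g y) = y" and "continuous_on UNIV g"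
    using hom by (auto simp: homeomorphism_def)
  have "connected ((\<phi> \<circ> g) ` P)"
    using \<open>connected P\<close> \<open>continuous_on UNIV g\<close> \<open>continuous_on UNIV \<phi>\<close>
    by (intro connected_continuous_image continuous_on_compose) (auto intro: continuous_on_subset)
  moreover have "\<phi> a \<in> (\<phi> \<circ> g) ` P" "\<phi> b \<in> (\<phi> \<circ> g) ` P"
    using assms(3,4) gf by (metis comp_apply image_eqI)+
  ultimately have "\<rho> \<in> (\<phi> \<circ> g) ` P"
    using assms(6,7) unfolding connected_iff_interval by blast
  then show thesis using fg that by auto
qed

lemma weakly_qs_doubling:
  fixes f :: "'a::euclidean_space \<Rightarrow> 'b::euclidean_space"
  assumes hom: "homeomorphism UNIV UNIV f g" and qs: "weakly_qs_on f B H" and "0 < H"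
    and sub: "cball c (2 * norm e) \<subseteq> B"
  shows "(1/H + 1/H^2) * dist (f (c + e)) (f c) \<le> dist (f (c + 2 *\<^sub>R e)) (f c)"
proof -
  define m q where "m = c + e" and "q = c + 2 *\<^sub>R e"
  have dq: "dist c q = 2 * norm e" by (simp add: q_def dist_norm)
  obtain v where v: "dist c v = norm e" "f v \<in> closed_segment (f c) (f q)"
    by (rule homeomorphism_hits_level_in_connected[OF hom, where \<phi>="dist c" and \<rho>="norm e"
          and a=c and b=q and P="closed_segment (f c) (f q)"]) (auto simp: dq intro!: continuous_intros)
  have split: "dist (f c) (f q) = dist (f c) (f v) + dist (f v) (f q)"
    using v(2) by (simp add: between_mem_segment[symmetric] between)
  have inB: "c \<in> B" "m \<in> B" "q \<in> B" "v \<in> B"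
    using sub v(1) dq by (auto simp: m_def q_def dist_norm subset_iff)
  have dm: "dist c m = norm e" "dist m q = norm e" "dist m c = norm e" "dist q m = norm e"
    unfolding m_def q_def dist_norm by (auto simp: norm_minus_commute scaleR_2 algebra_simps)
  have "norm e \<le> dist q v"
    using dist_triangle[of q c v] dq v(1) by (simp add: dist_commute)
  define A where "A = dist (f m) (f c)"
  have "A \<le> H * dist (f c) (f v)"
    using weakly_qs_onD[OF qs inB(1,2,4)] by (simp add: A_def dm v dist_commute)
  moreover have "A \<le> H * dist (f m) (f q)"
    using weakly_qs_onD[OF qs inB(2,1,3)] by (simp add: A_def dm)
  moreover have "dist (f q) (f m) \<le> H * dist (f q) (f v)"
    using weakly_qs_onD[OF qs inB(3,2,4)] by (simp add: dm \<open>norm e \<le> dist q v\<close>)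
  ultimately have "A / H \<le> dist (f c) (f v)" "A / H^2 \<le> dist (f v) (f q)"
    using \<open>0 < H\<close> by (auto simp: field_simps power2_eq_square dist_commute intro: order_trans)
  then show ?thesis
    using split by (simp add: A_def m_def q_def algebra_simps dist_commute add_divide_distrib)
qed

lemma weakly_qs_iterated_doubling:
  fixes f :: "'a::euclidean_space \<Rightarrow> 'b::euclidean_space"
  assumes hom: "homeomorphism UNIV UNIV f g" and qs: "weakly_qs_on f B H" and "0 < H"
    and "cball c (2^k * norm e) \<subseteq> B"
  shows "(1/H + 1/H^2)^k * dist (f (c + e)) (f c) \<le> dist (f (c + 2^k *\<^sub>R e)) (f c)"
  using assms(4)
proof (induction k)
  case 0
  then show ?case by simp
next
  case (Suc k)
  have "cball c (2^k * norm e) \<subseteq> cball c (2^Suc k * norm e)"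
    by (rule subset_cball) simp
  with Suc have IH: "(1/H + 1/H^2)^k * dist (f (c + e)) (f c) \<le> dist (f (c + 2^k *\<^sub>R e)) (f c)"
    by blast
  have "cball c (2 * norm (2^k *\<^sub>R e)) \<subseteq> B"
    using Suc.prems by (simp add: mult.assoc)
  from weakly_qs_doubling[OF hom qs \<open>0 < H\<close> this]
  have step: "(1/H + 1/H^2) * dist (f (c + 2^k *\<^sub>R e)) (f c) \<le> dist (f (c + 2^Suc k *\<^sub>R e)) (f c)"
    by simp
  have "0 \<le> 1/H + 1/H^2" using \<open>0 < H\<close> by simp
  with IH have "(1/H + 1/H^2)^Suc k * dist (f (c + e)) (f c)
      \<le> (1/H + 1/H^2) * dist (f (c + 2^k *\<^sub>R e)) (f c)"
    by (simp add: mult.assoc mult_left_mono)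
  with step show ?case by linarith
qed

lemma doubling_factor_ge:
  fixes H :: real
  assumes "0 < H" "H \<le> 41/40"
  shows "1.92 \<le> 1/H + 1/H^2"
proof -
  have h: "40/41 \<le> 1/H" using assms by (simp add: field_simps)
  then have "(40/41)^2 \<le> (1/H)^2" by (rule power_mono) simp
  with h show ?thesis by (simp add: power_divide power2_eq_square)
qed

lemma doubling_factor_power_large:
  fixes \<epsilon> :: real
  assumes "0 < \<epsilon>" "\<epsilon> \<le> 1/40"
  obtains k where "1 + \<epsilon> \<le> \<epsilon> / 8 * (1/(1 + \<epsilon>) + 1/(1 + \<epsilon>)^2)^k"
proof -
  have "1 < 1/(1 + \<epsilon>) + 1/(1 + \<epsilon>)^2" using doubling_factor_ge[of "1 + \<epsilon>"] assms by simp
  then obtain k where "8 * (1 + \<epsilon>) / \<epsilon> < (1/(1 + \<epsilon>) + 1/(1 + \<epsilon>)^2)^k"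
    using real_arch_pow by blast
  then show thesis using assms by (intro that[of k]) (simp add: field_simps)
qed

lemma weakly_qs_preimage_localized:
  fixes f :: "'a::euclidean_space \<Rightarrow> 'b::euclidean_space"
  assumes hom: "homeomorphism UNIV UNIV f g" and qs: "weakly_qs_on f (ball x0 r) H"
    and H: "0 < H" "H \<le> 41/40" and s: "0 < s" "8 * s < r" and a: "dist x0 a = s"
    and w: "dist (f w) (f x0) \<le> 5 * dist (f x0) (f a)"
  shows "dist w x0 < 8 * s"
proof (rule ccontr)
  assume far: "\<not> dist w x0 < 8 * s"
  have gf: "\<And>x. g (f x) = x" using hom by (simp add: homeomorphism_def)
  obtain v where v: "dist x0 v = 8 * s" "f v \<in> closed_segment (f x0) (f w)"
    by (rule homeomorphism_hits_level_in_connected[OF hom, where \<phi>="dist x0" and \<rho>="8 * s"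
          and a=x0 and b=w and P="closed_segment (f x0) (f w)"])
       (use far s in \<open>auto simp: dist_commute[of x0] intro!: continuous_intros\<close>)
  define e where "e = (1/8) *\<^sub>R (v - x0)"
  have ne: "norm e = s" using v(1) by (simp add: e_def dist_norm norm_minus_commute)
  have v_eq: "x0 + 2^3 *\<^sub>R e = v" by (simp add: e_def)
  have "cball x0 (2^3 * norm e) \<subseteq> ball x0 r" using ne s by (auto simp: subset_iff)
  from weakly_qs_iterated_doubling[OF hom qs H(1) this]
  have grow: "(1/H + 1/H^2)^3 * dist (f (x0 + e)) (f x0) \<le> dist (f v) (f x0)"
    by (simp only: v_eq)
  have "x0 + e \<in> ball x0 r" "a \<in> ball x0 r" "x0 \<in> ball x0 r" using ne a s by (auto simp: dist_norm)
  then have near: "dist (f x0) (f a) \<le> H * dist (f x0) (f (x0 + e))"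
    using a ne by (intro weakly_qs_onD[OF qs]) (auto simp: dist_norm)
  define X where "X = dist (f (x0 + e)) (f x0)"
  have "(7::real) \<le> 1.92^3" by (simp add: power3_eq_cube)
  also have "\<dots> \<le> (1/H + 1/H^2)^3" by (rule power_mono[OF doubling_factor_ge[OF H]]) simp
  finally have "7 * X \<le> (1/H + 1/H^2)^3 * X" by (rule mult_right_mono) (simp add: X_def)
  also have "\<dots> \<le> dist (f w) (f x0)"
    using grow dist_in_closed_segment[OF v(2)] by (simp add: X_def dist_commute)
  also have "\<dots> \<le> 5 * (H * X)" using w near by (simp add: X_def dist_commute)
  also have "\<dots> \<le> 5 * (41/40 * X)" using mult_right_mono[OF H(2), of X] by (simp add: X_def)
  finally have "X \<le> 0" by linarith
  then have "X = 0" by (simp add: X_def)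
  then have "e = 0" using gf by (metis X_def add_cancel_right_right dist_eq_0_iff)
  then show False using ne s by simp
qed

lemma weakly_qs_small_scale:
  fixes f :: "'a::euclidean_space \<Rightarrow> 'b::euclidean_space"
  assumes hom: "homeomorphism UNIV UNIV f g" and qs: "weakly_qs_on f B H" and "0 < H"
    and sub: "cball b (2^k * dist b b') \<subseteq> B" and "a \<in> B" and far: "2^k * dist b b' \<le> dist b a"
  shows "(1/H + 1/H^2)^k * dist (f b) (f b') \<le> H * dist (f b) (f a)"
proof -
  define e where "e = b' - b"
  have ne: "norm e = dist b b'" by (simp add: e_def dist_norm norm_minus_commute)
  have "(1/H + 1/H^2)^k * dist (f (b + e)) (f b) \<le> dist (f (b + 2^k *\<^sub>R e)) (f b)"
    using weakly_qs_iterated_doubling[OF hom qs \<open>0 < H\<close>] sub by (simp add: ne)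
  moreover have "dist (f b) (f (b + 2^k *\<^sub>R e)) \<le> H * dist (f b) (f a)"
    using sub far \<open>a \<in> B\<close> by (intro weakly_qs_onD[OF qs]) (auto simp: ne dist_norm)
  ultimately show ?thesis by (simp add: e_def dist_commute)
qed

lemma dist_scaleR_unit: "norm x0 = 1 \<Longrightarrow> dist (\<alpha> *\<^sub>R x0) (\<beta> *\<^sub>R x0) = \<bar>\<alpha> - \<beta>\<bar>"
  by (simp add: dist_norm flip: scaleR_diff_left)

lemma dist_scaleR_unit_sq_diff:
  fixes w x0 :: "'a::real_inner"
  assumes "norm x0 = 1"
  shows "(dist w (\<alpha> *\<^sub>R x0))^2 - (dist w (\<beta> *\<^sub>R x0))^2 = (\<alpha> - \<beta>) * (\<alpha> + \<beta> - 2 * (w \<bullet> x0))"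
proof -
  have "x0 \<bullet> x0 = 1" using assms by (simp add: dot_square_norm)
  then show ?thesis
    unfolding dist_norm power2_norm_eq_inner
    by (simp add: inner_diff_left inner_diff_right inner_commute algebra_simps)
qed

lemma dist_inner_ray_point_le:
  fixes w x0 :: "'a::real_inner"
  assumes "norm x0 = 1" "norm w \<le> 1" "0 \<le> s"
  shows "dist w ((1 - s) *\<^sub>R x0) \<le> dist w ((1 + s) *\<^sub>R x0)"
proof -
  have "w \<bullet> x0 \<le> 1" using norm_cauchy_schwarz[of w x0] assms by simp
  then have "0 \<le> 2 * s * (2 - 2 * (w \<bullet> x0))" using assms by simp
  moreover have "(dist w ((1 + s) *\<^sub>R x0))^2 - (dist w ((1 - s) *\<^sub>R x0))^2
      = 2 * s * (2 - 2 * (w \<bullet> x0))"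
    using dist_scaleR_unit_sq_diff[OF assms(1), of w "1 + s" "1 - s"] by simp
  ultimately have "(dist w ((1 - s) *\<^sub>R x0))^2 \<le> (dist w ((1 + s) *\<^sub>R x0))^2" by linarith
  then show ?thesis by (rule power2_le_imp_le) simp
qed

lemma dist_outer_ray_point_le:
  fixes w x0 :: "'a::real_inner"
  assumes "norm x0 = 1" "1 \<le> norm w" "0 \<le> s" "dist w x0 < 8 * s"
  shows "dist w ((1 + s) *\<^sub>R x0) \<le> dist w ((1 - s - (8 * s)^2) *\<^sub>R x0)"
proof -
  have "(dist w x0)^2 < (8 * s)^2" using assms(4) by (rule power_strict_mono) simp_all
  moreover have "(dist w x0)^2 = (norm w)^2 - 2 * (w \<bullet> x0) + 1"
    using dist_scaleR_unit_sq_diff[OF assms(1), of w 1 0] by (simp add: algebra_simps)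
  moreover have "1 \<le> (norm w)^2" using assms(2) by (simp add: one_le_power)
  ultimately have "2 - (8 * s)^2 - 2 * (w \<bullet> x0) \<le> 0" by linarith
  then have "(2 * s + (8 * s)^2) * (2 - (8 * s)^2 - 2 * (w \<bullet> x0)) \<le> 0"
    using assms(3) by (simp add: mult_nonneg_nonpos)
  moreover have "(dist w ((1 + s) *\<^sub>R x0))^2 - (dist w ((1 - s - (8 * s)^2) *\<^sub>R x0))^2
      = (2 * s + (8 * s)^2) * (2 - (8 * s)^2 - 2 * (w \<bullet> x0))"
    using dist_scaleR_unit_sq_diff[OF assms(1), of w "1 + s" "1 - s - (8 * s)^2"]
    by (simp add: algebra_simps)
  ultimately have "(dist w ((1 + s) *\<^sub>R x0))^2 \<le> (dist w ((1 - s - (8 * s)^2) *\<^sub>R x0))^2"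
    by linarith
  then show ?thesis by (rule power2_le_imp_le) simp
qed

lemma dist_sq_diff_eq_inner_midpoint:
  fixes q u v :: "'a::real_inner"
  shows "(dist q v)^2 - (dist q u)^2 = 2 * ((q - midpoint u v) \<bullet> (u - v))"
  by (simp add: midpoint_def dist_norm power2_norm_eq_inner inner_diff_left inner_diff_right
      inner_add_left inner_add_right inner_commute algebra_simps)

lemma almost_closer_imp_inner_sgn_le:
  fixes p q u v :: "'a::real_inner"
  assumes \<epsilon>: "0 < \<epsilon>" "\<epsilon> \<le> 1/40" and \<eta>: "0 \<le> \<eta>" "\<eta> \<le> \<epsilon> * dist u v / 7"
    and pu: "dist p u \<le> (1 + \<epsilon>) * dist u v" and qp: "dist q p \<le> 2 * dist u v"
    and qv: "dist q v \<le> (1 + \<epsilon>) * dist q u + \<eta>"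
  shows "(q - midpoint u v) \<bullet> sgn (u - v) \<le> 10 * \<epsilon> * dist u v"
proof -
  define t \<alpha> \<beta> where "t = dist u v" and "\<alpha> = dist q u" and "\<beta> = dist q v"
  have t: "0 \<le> t" by (simp add: t_def)
  have "(1 + \<epsilon>) * t \<le> 41/40 * t" using \<epsilon> t by (intro mult_right_mono) auto
  then have \<alpha>: "0 \<le> \<alpha>" "\<alpha> \<le> 121/40 * t"
    using dist_triangle[of q u p] pu qp by (auto simp: \<alpha>_def t_def)
  have "\<beta>^2 \<le> ((1 + \<epsilon>) * \<alpha> + \<eta>)^2"
    using qv \<alpha> \<epsilon> \<eta> by (intro power_mono) (simp_all add: \<alpha>_def \<beta>_def)
  also have "\<dots> = \<alpha>^2 + \<epsilon> * (2 + \<epsilon>) * \<alpha>^2 + 2 * (1 + \<epsilon>) * \<alpha> * \<eta> + \<eta>^2"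
    by (simp add: power2_eq_square algebra_simps)
  finally have "\<beta>^2 - \<alpha>^2 \<le> \<epsilon> * (2 + \<epsilon>) * \<alpha>^2 + 2 * (1 + \<epsilon>) * \<alpha> * \<eta> + \<eta>^2"
    by simp
  also have "\<dots> \<le> \<epsilon> * (81/40) * (121/40 * t)^2 + 2 * (41/40) * (121/40 * t) * (\<epsilon> * t / 7)
      + (\<epsilon> * t / 7)^2"
    using \<alpha> \<epsilon> \<eta> t unfolding t_def
    by (intro add_mono mult_mono power_mono) auto
  also have "\<dots> \<le> 20 * \<epsilon> * t^2"
  proof -
    have "\<epsilon> * t^2 \<le> t^2" using \<epsilon> by (simp add: mult_left_le_one_le)
    then have "(\<epsilon> * t / 7)^2 \<le> \<epsilon> * t^2 / 49"
      using \<epsilon> by (simp add: power2_eq_square ac_simps)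
    moreover have "\<epsilon> * (81/40) * (121/40 * t)^2 + 2 * (41/40) * (121/40 * t) * (\<epsilon> * t / 7)
        = 8698327/448000 * (\<epsilon> * t^2)"
      by (simp add: power2_eq_square algebra_simps)
    moreover have "0 \<le> \<epsilon> * t^2" using \<epsilon> by simp
    ultimately show ?thesis by linarith
  qed
  finally have "(q - midpoint u v) \<bullet> (u - v) \<le> 10 * \<epsilon> * t^2"
    using dist_sq_diff_eq_inner_midpoint[of q v u] by (simp add: \<alpha>_def \<beta>_def)
  moreover have "(q - midpoint u v) \<bullet> sgn (u - v) = (q - midpoint u v) \<bullet> (u - v) / t"
    unfolding sgn_div_norm inner_scaleR_right by (simp add: t_def dist_norm divide_inverse_commute)
  ultimately show ?thesis
    using t \<epsilon> by (cases "t = 0") (simp_all add: t_def [symmetric] power2_eq_square divide_le_eq mult.assoc)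
qed

lemma infdist_hyperplane_disk_le:
  fixes N p x :: "'a::real_inner"
  assumes N: "norm N = 1" and x: "dist p x \<le> t"
  shows "infdist x ({q. N \<bullet> (q - p) = 0} \<inter> cball p t) \<le> \<bar>N \<bullet> (x - p)\<bar>"
proof -
  define c where "c = N \<bullet> (x - p)"
  define x' where "x' = x - c *\<^sub>R N"
  have NN: "N \<bullet> N = 1" using N by (simp add: dot_square_norm)
  have orth: "N \<bullet> (x' - p) = 0"
    by (simp add: x'_def c_def inner_diff_right NN algebra_simps)
  have "(norm (x' - p))^2 + c^2 = (norm (x - p))^2"
    using norm_add_Pythagorean[of "x' - p" "c *\<^sub>R N"] orth N
    by (simp add: x'_def orthogonal_def inner_commute power_mult_distrib)
  also have "\<dots> \<le> t^2"
    using x by (intro power_mono) (simp_all add: dist_norm norm_minus_commute)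
  finally have "(norm (x' - p))^2 \<le> t^2" using zero_le_power2[of c] by linarith
  then have "norm (x' - p) \<le> t"
    by (rule power2_le_imp_le) (use x zero_le_dist[of p x] in linarith)
  then have "x' \<in> {q. N \<bullet> (q - p) = 0} \<inter> cball p t"
    using orth by (simp add: dist_norm norm_minus_commute)
  then have "infdist x ({q. N \<bullet> (q - p) = 0} \<inter> cball p t) \<le> dist x x'"
    by (rule infdist_le)
  also have "\<dots> = \<bar>c\<bar>" using N by (simp add: x'_def dist_norm)
  finally show ?thesis by (simp add: c_def)
qed

lemma image_sphere_meets_normal_segment:
  fixes f :: "'a::euclidean_space \<Rightarrow> 'a"
  assumes hom: "homeomorphism UNIV UNIV f g" and "0 \<le> d"
    and out: "1 < norm (g (y + d *\<^sub>R N))" and "in": "norm (g (y - d *\<^sub>R N)) < 1"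
  obtains w c where "norm w = 1" "f w = y + c *\<^sub>R N" "\<bar>c\<bar> \<le> d"
proof -
  have fg: "\<And>y. f (g y) = y" using hom by (simp add: homeomorphism_def)
  define P where "P = (\<lambda>c. y + c *\<^sub>R N) ` {-d..d}"
  have "y + d *\<^sub>R N \<in> P" "y - d *\<^sub>R N \<in> P"
    unfolding P_def using \<open>0 \<le> d\<close> by (auto intro: image_eqI[where x=d] image_eqI[where x="-d"])
  moreover have "connected P"
    unfolding P_def by (intro connected_continuous_image continuous_intros) simp
  ultimately obtain w where "norm w = 1" "f w \<in> P"
    using out "in"
    by (elim homeomorphism_hits_level_in_connected[OF hom, where \<phi>=norm and \<rho>=1
          and a="g (y - d *\<^sub>R N)" and b="g (y + d *\<^sub>R N)"])
       (auto simp: fg intro: continuous_intros)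
  moreover obtain c where "f w = y + c *\<^sub>R N" "c \<in> {-d..d}"
    using \<open>f w \<in> P\<close> unfolding P_def by blast
  ultimately show thesis by (intro that[of w c]) auto
qed

lemma norm_add_normal_le:
  fixes v N :: "'a::real_inner"
  assumes "norm N = 1" "N \<bullet> v = 0" "0 \<le> \<kappa>" "\<kappa> \<le> 1" "0 \<le> t"
    and v: "norm v \<le> (1 - \<kappa>^2) * t" and c: "\<bar>c\<bar> \<le> \<kappa> * t"
  shows "norm (v + c *\<^sub>R N) \<le> t"
proof -
  have \<kappa>2: "0 \<le> \<kappa>^2" "\<kappa>^2 \<le> 1" using assms(3,4) by (simp_all add: power_le_one)
  have "(norm (v + c *\<^sub>R N))^2 = (norm v)^2 + c^2"
    using norm_add_Pythagorean[of v "c *\<^sub>R N"] assms(1,2)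
    by (simp add: orthogonal_def inner_commute power_mult_distrib)
  also have "\<dots> \<le> ((1 - \<kappa>^2) * t)^2 + (\<kappa> * t)^2"
    using power_mono[OF v norm_ge_zero, of 2] power_mono[OF c abs_ge_zero, of 2]
    by (auto intro!: add_mono)
  also have "\<dots> \<le> t^2"
  proof -
    have "\<kappa>^2 * \<kappa>^2 \<le> \<kappa>^2" using \<kappa>2 by (intro mult_left_le_one_le) simp_all
    then have "\<kappa>^2 * \<kappa>^2 * t^2 \<le> \<kappa>^2 * t^2" by (rule mult_right_mono) simp
    moreover have "((1 - \<kappa>^2) * t)^2 + (\<kappa> * t)^2 = t^2 - \<kappa>^2 * t^2 + \<kappa>^2 * \<kappa>^2 * t^2"
      by (simp add: power2_eq_square algebra_simps)
    ultimately show ?thesis by linarith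
  qed
  finally show ?thesis by (rule power2_le_imp_le) (use \<open>0 \<le> t\<close> in simp)
qed

text \<open>The witness on the sphere is found on the normal segment through a point slightly
  pulled towards \<open>p\<close>, so that it stays inside the ball of radius \<open>t\<close>.\<close>
lemma infdist_hyperplane_to_separating_image_le:
  fixes f :: "'a::euclidean_space \<Rightarrow> 'a"
  assumes hom: "homeomorphism UNIV UNIV f g" and N: "norm N = 1" and "0 < t"
    and \<kappa>: "0 \<le> \<kappa>" "\<kappa> \<le> 1"
    and inside: "\<And>w. dist (f w) p \<le> 2 * t \<Longrightarrow> norm w \<le> 1 \<Longrightarrow> N \<bullet> (f w - p) < \<kappa> * t"
    and outside: "\<And>w. dist (f w) p \<le> 2 * t \<Longrightarrow> 1 \<le> norm w \<Longrightarrow> - (\<kappa> * t) < N \<bullet> (f w - p)"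
    and y: "N \<bullet> (y - p) = 0" "dist p y \<le> t"
  shows "infdist y (f ` sphere 0 1 \<inter> cball p t) \<le> (\<kappa>^2 + \<kappa>) * t"
proof -
  have fg: "\<And>y. f (g y) = y" using hom by (simp add: homeomorphism_def)
  have NN: "N \<bullet> N = 1" using N by (simp add: dot_square_norm)
  have \<kappa>2: "0 \<le> \<kappa>^2" "\<kappa>^2 \<le> 1" using \<kappa> by (simp_all add: power_le_one)
  define y' where "y' = p + (1 - \<kappa>^2) *\<^sub>R (y - p)"
  have y'p: "N \<bullet> (y' - p) = 0" "norm (y' - p) \<le> (1 - \<kappa>^2) * t"
    using y \<kappa>2 by (simp_all add: y'_def dist_norm norm_minus_commute mult_left_mono)
  have near: "dist (y' + c *\<^sub>R N) p \<le> t" if "\<bar>c\<bar> \<le> \<kappa> * t" for c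
    using norm_add_normal_le[OF N y'p(1) \<kappa> _ y'p(2) that] \<open>0 < t\<close> by (simp add: dist_norm algebra_simps)
  have level: "N \<bullet> (y' + c *\<^sub>R N - p) = c" for c
    using y'p NN by (simp add: inner_diff_right inner_add_right algebra_simps)
  have "0 \<le> \<kappa> * t" using \<kappa> \<open>0 < t\<close> by simp
  moreover have "1 < norm (g (y' + (\<kappa> * t) *\<^sub>R N))"
    using inside[of "g (y' + (\<kappa> * t) *\<^sub>R N)"] near[of "\<kappa> * t"] level[of "\<kappa> * t"] \<kappa> \<open>0 < t\<close>
    by (force simp: fg)
  moreover have "norm (g (y' - (\<kappa> * t) *\<^sub>R N)) < 1"
    using outside[of "g (y' - (\<kappa> * t) *\<^sub>R N)"] near[of "- (\<kappa> * t)"] level[of "- (\<kappa> * t)"]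
      \<kappa> \<open>0 < t\<close> by (force simp: fg)
  ultimately obtain w c where w: "norm w = 1" "f w = y' + c *\<^sub>R N" and c: "\<bar>c\<bar> \<le> \<kappa> * t"
    by (rule image_sphere_meets_normal_segment[OF hom])
  have "f w \<in> f ` sphere 0 1 \<inter> cball p t"
    using near[OF c] w(1) by (simp add: w(2)[symmetric] dist_commute)
  then have "infdist y (f ` sphere 0 1 \<inter> cball p t) \<le> dist y (f w)"
    by (rule infdist_le)
  also have "\<dots> \<le> dist y y' + dist y' (f w)" by (rule dist_triangle)
  also have "\<dots> \<le> \<kappa>^2 * t + \<kappa> * t"
  proof (rule add_mono)
    have "y - y' = \<kappa>^2 *\<^sub>R (y - p)" by (simp add: y'_def algebra_simps)
    then have "dist y y' = \<kappa>^2 * dist p y" by (simp add: dist_norm norm_minus_commute)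
    then show "dist y y' \<le> \<kappa>^2 * t" using y(2) \<kappa>2 by (simp add: mult_left_mono)
    show "dist y' (f w) \<le> \<kappa> * t" using w c N by (simp add: dist_norm)
  qed
  finally show ?thesis by (simp add: algebra_simps)
qed

lemma hausdorff_dist_le:
  assumes "A \<noteq> {}" "B \<noteq> {}"
    and "\<And>a. a \<in> A \<Longrightarrow> infdist a B \<le> c" "\<And>b. b \<in> B \<Longrightarrow> infdist b A \<le> c"
  shows "hausdorff_dist A B \<le> c"
  unfolding hausdorff_dist_def using assms by (simp add: cSUP_least)

lemma hausdorff_dist_nonneg:
  assumes "A \<noteq> {}" "B \<noteq> {}" "bounded A"
  shows "0 \<le> hausdorff_dist A B"
proof -
  obtain a b where "a \<in> A" "b \<in> B" using assms(1,2) by blast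
  obtain R where R: "\<And>x. x \<in> A \<Longrightarrow> dist b x \<le> R"
    using \<open>bounded A\<close> by (meson bounded_any_center)
  have "infdist x B \<le> R" if "x \<in> A" for x
    using infdist_le[OF \<open>b \<in> B\<close>, of x] R[OF that] by (simp add: dist_commute)
  then have "bdd_above ((\<lambda>x. infdist x B) ` A)" by (rule bdd_aboveI2)
  then have "infdist a B \<le> (SUP x\<in>A. infdist x B)"
    using \<open>a \<in> A\<close> by (rule cSUP_upper2) simp
  then show ?thesis
    unfolding hausdorff_dist_def using infdist_nonneg[of a B] by linarith
qed

lemma hausdorff_dist_image_sphere_hyperplane_le:
  fixes f :: "'a::euclidean_space \<Rightarrow> 'a"
  assumes hom: "homeomorphism UNIV UNIV f g" and "norm x0 = 1" and N: "norm N = 1" and "0 < t"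
    and \<kappa>: "0 \<le> \<kappa>" "\<kappa> \<le> 1" "c < \<kappa> * t"
    and inside: "\<And>w. dist (f w) (f x0) \<le> 2 * t \<Longrightarrow> norm w \<le> 1 \<Longrightarrow> N \<bullet> (f w - f x0) \<le> c"
    and outside: "\<And>w. dist (f w) (f x0) \<le> 2 * t \<Longrightarrow> 1 \<le> norm w \<Longrightarrow> - c \<le> N \<bullet> (f w - f x0)"
  shows "hausdorff_dist (f ` sphere 0 1 \<inter> cball (f x0) t) ({q. N \<bullet> (q - f x0) = 0} \<inter> cball (f x0) t)
    \<le> (\<kappa>^2 + \<kappa>) * t"
proof (rule hausdorff_dist_le)
  have "f x0 \<in> f ` sphere 0 1 \<inter> cball (f x0) t" "f x0 \<in> {q. N \<bullet> (q - f x0) = 0} \<inter> cball (f x0) t"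
    using \<open>norm x0 = 1\<close> \<open>0 < t\<close> by auto
  then show "f ` sphere 0 1 \<inter> cball (f x0) t \<noteq> {}" "{q. N \<bullet> (q - f x0) = 0} \<inter> cball (f x0) t \<noteq> {}"
    by blast+
  show "infdist q ({q. N \<bullet> (q - f x0) = 0} \<inter> cball (f x0) t) \<le> (\<kappa>^2 + \<kappa>) * t"
    if q: "q \<in> f ` sphere 0 1 \<inter> cball (f x0) t" for q
  proof -
    obtain w where w: "norm w = 1" "q = f w" "dist (f x0) q \<le> t" using q by auto
    then have "dist (f w) (f x0) \<le> 2 * t" using \<open>0 < t\<close> by (simp add: dist_commute)
    then have "\<bar>N \<bullet> (q - f x0)\<bar> \<le> c" using inside[of w] outside[of w] w by (simp add: abs_le_iff)
    moreover have "c \<le> (\<kappa>^2 + \<kappa>) * t"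
      using \<kappa> \<open>0 < t\<close> zero_le_power2[of \<kappa>] by (simp add: distrib_right add_increasing)
    ultimately show ?thesis using infdist_hyperplane_disk_le[OF N w(3)] by linarith
  qed
  show "infdist y (f ` sphere 0 1 \<inter> cball (f x0) t) \<le> (\<kappa>^2 + \<kappa>) * t"
    if "y \<in> {q. N \<bullet> (q - f x0) = 0} \<inter> cball (f x0) t" for y
    using that \<kappa> \<open>0 < t\<close> inside outside
    by (intro infdist_hyperplane_to_separating_image_le[OF hom N]) force+
qed

lemma theta_le_if_near_hyperplane:
  fixes \<Sigma> :: "(real ^ 'n) set"
  assumes "x \<in> \<Sigma>" "0 < t" "N \<noteq> 0"
    and near: "hausdorff_dist (\<Sigma> \<inter> cball x t) ({q. N \<bullet> (q - x) = 0} \<inter> cball x t) \<le> c * t"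
  shows "theta \<Sigma> x t \<le> c"
proof -
  define F where "F L = hausdorff_dist (\<Sigma> \<inter> cball x t) ((\<lambda>v. x + v) ` L \<inter> cball x t)" for L
  define \<H> where "\<H> = {L :: (real ^ 'n) set. subspace L \<and> dim L = CARD('n) - 1}"
  have "{v. N \<bullet> v = 0} \<in> \<H>"
    using dim_hyperplane[OF \<open>N \<noteq> 0\<close>] by (simp add: \<H>_def subspace_hyperplane)
  moreover have "(\<lambda>v. x + v) ` {v. N \<bullet> v = 0} = {q. N \<bullet> (q - x) = 0}"
    by (auto simp: image_iff intro!: exI[of _ "q - x" for q])
  moreover have "0 \<le> F L" if "L \<in> \<H>" for L
  proof -
    have "x \<in> (\<lambda>v. x + v) ` L" using that by (auto simp: \<H>_def subspace_0 intro: image_eqI[of x _ 0])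
    then show ?thesis
      unfolding F_def using \<open>x \<in> \<Sigma>\<close> \<open>0 < t\<close> by (intro hausdorff_dist_nonneg) auto
  qed
  ultimately have "Inf (F ` \<H>) \<le> c * t"
    using near by (intro cINF_lower2[where x="{v. N \<bullet> v = 0}"] bdd_belowI2[where m=0]) (auto simp: F_def)
  then show ?thesis
    using \<open>0 < t\<close> by (simp add: theta_def F_def \<H>_def field_simps)
qed

text \<open>The inner point \<open>ray_in'\<close> is pushed inwards by \<open>(8 s)^2\<close>: relevant points outside the unit
  ball lie within \<open>8 s\<close> of \<open>x0\<close> and are therefore closer to \<open>ray_out\<close> than to \<open>ray_in'\<close>, while
  \<open>k\<close> doublings show that this shift moves the image by at most \<open>\<epsilon> / 8\<close> times the gap.\<close>
locale weakly_qs_sphere_scale =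
  fixes f g :: "'a::euclidean_space \<Rightarrow> 'a" and x0 :: 'a and r \<epsilon> s :: real and k :: nat
  assumes hom: "homeomorphism UNIV UNIV f g" and x0: "norm x0 = 1"
    and qs: "weakly_qs_on f (ball x0 r) (1 + \<epsilon>)" and \<epsilon>: "0 < \<epsilon>" "\<epsilon> \<le> 1/40"
    and s: "0 < s" "16 * s \<le> r" "2^k * 32 * s \<le> 1"
    and k: "1 + \<epsilon> \<le> \<epsilon> / 8 * (1/(1 + \<epsilon>) + 1/(1 + \<epsilon>)^2)^k"
begin

definition ray_out where "ray_out = (1 + s) *\<^sub>R x0"
definition ray_in where "ray_in = (1 - s) *\<^sub>R x0"
definition ray_in' where "ray_in' = (1 - s - (8 * s)^2) *\<^sub>R x0"
definition image_gap where "image_gap = dist (f ray_out) (f ray_in)"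

lemma g_f_eq: "g (f x) = x"
  using hom by (simp add: homeomorphism_def)

lemma doubled_perturbation_le: "2^k * (8 * s)^2 \<le> 2 * s"
proof -
  have "2^k * (8 * s)^2 = 2 * s * (2^k * 32 * s)" by (simp add: power2_eq_square)
  also have "\<dots> \<le> 2 * s" by (rule mult_left_le) (use s in simp_all)
  finally show ?thesis .
qed

lemma ray_dists:
  "dist x0 ray_out = s" "dist ray_out x0 = s" "dist x0 ray_in = s" "dist ray_in x0 = s"
  "dist ray_out ray_in = 2 * s" "dist ray_in ray_out = 2 * s"
  "dist ray_in ray_in' = (8 * s)^2" "dist x0 ray_in' = s + (8 * s)^2"
  using dist_scaleR_unit[OF x0, of 1] dist_scaleR_unit[OF x0, of _ 1] dist_scaleR_unit[OF x0] x0 s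
  by (simp_all add: ray_out_def ray_in_def ray_in'_def)

lemma perturbation_le: "(8 * s)^2 \<le> 2 * s"
proof -
  have "(8 * s)^2 \<le> 2^k * (8 * s)^2" by (simp add: mult_le_cancel_right1)
  then show ?thesis using doubled_perturbation_le by linarith
qed

lemma ray_points_in_ball: "x0 \<in> ball x0 r" "ray_out \<in> ball x0 r" "ray_in \<in> ball x0 r" "ray_in' \<in> ball x0 r"
  using perturbation_le ray_dists s by simp_all

lemma image_gap_pos: "0 < image_gap"
proof -
  have "ray_out \<noteq> ray_in" using ray_dists s by auto
  then show ?thesis unfolding image_gap_def by (metis g_f_eq zero_less_dist_iff)
qed

lemma dist_image_x0_le:
  "dist (f x0) (f ray_out) \<le> (1 + \<epsilon>) * image_gap" "dist (f x0) (f ray_in) \<le> (1 + \<epsilon>) * image_gap"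
  "image_gap \<le> 5/2 * dist (f x0) (f ray_out)"
proof -
  show "dist (f x0) (f ray_out) \<le> (1 + \<epsilon>) * image_gap"
    using weakly_qs_onD[OF qs ray_points_in_ball(2,1,3)] ray_dists s by (simp add: image_gap_def dist_commute)
  show "dist (f x0) (f ray_in) \<le> (1 + \<epsilon>) * image_gap"
    using weakly_qs_onD[OF qs ray_points_in_ball(3,1,2)] ray_dists s by (simp add: image_gap_def dist_commute)
  have "dist (f x0) (f ray_in) \<le> (1 + \<epsilon>) * dist (f x0) (f ray_out)"
    using weakly_qs_onD[OF qs ray_points_in_ball(1,3,2)] ray_dists by simp
  then have "image_gap \<le> (2 + \<epsilon>) * dist (f x0) (f ray_out)"
    using dist_triangle[of "f ray_out" "f ray_in" "f x0"]
    by (simp add: image_gap_def dist_commute algebra_simps)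
  also have "\<dots> \<le> 5/2 * dist (f x0) (f ray_out)" using \<epsilon> by (intro mult_right_mono) simp_all
  finally show "image_gap \<le> 5/2 * dist (f x0) (f ray_out)" .
qed

lemma preimage_near_x0:
  assumes "dist (f w) (f x0) \<le> 2 * image_gap"
  shows "dist w x0 < 8 * s"
  using assms dist_image_x0_le(3) \<epsilon> s ray_dists
  by (intro weakly_qs_preimage_localized[OF hom qs, of s ray_out]) simp_all

lemma dist_image_ray_in'_le: "dist (f ray_in) (f ray_in') \<le> \<epsilon> / 8 * image_gap"
proof -
  let ?\<gamma> = "(1/(1 + \<epsilon>) + 1/(1 + \<epsilon>)^2)^k"
  have "cball ray_in (2^k * dist ray_in ray_in') \<subseteq> ball x0 r"
  proof
    fix y assume "y \<in> cball ray_in (2^k * dist ray_in ray_in')"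
    then have "dist ray_in y \<le> 2^k * (8 * s)^2" by (simp only: mem_cball ray_dists(7))
    then have "dist ray_in y \<le> 2 * s" using doubled_perturbation_le by linarith
    then show "y \<in> ball x0 r" using dist_triangle[of x0 y ray_in] ray_dists s by simp
  qed
  from weakly_qs_small_scale[OF hom qs _ this ray_points_in_ball(2)]
  have "?\<gamma> * dist (f ray_in) (f ray_in') \<le> (1 + \<epsilon>) * image_gap"
    using doubled_perturbation_le ray_dists \<epsilon> by (simp add: image_gap_def dist_commute)
  also have "\<dots> \<le> ?\<gamma> * (\<epsilon> / 8 * image_gap)"
    using mult_right_mono[OF k less_imp_le[OF image_gap_pos]] by (simp add: ac_simps)
  finally show ?thesis
    by (rule mult_left_le_imp_le) (use \<epsilon> in \<open>intro zero_less_power add_pos_pos, simp_all\<close>)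
qed

definition normal where "normal = sgn (f ray_out - f ray_in)"
definition image_midpoint where "image_midpoint = midpoint (f ray_out) (f ray_in)"

lemma normal_unit: "norm normal = 1"
  using image_gap_pos by (simp add: normal_def norm_sgn image_gap_def)

lemma image_inside_halfspace:
  assumes "dist (f w) (f x0) \<le> 2 * image_gap" "norm w \<le> 1"
  shows "(f w - image_midpoint) \<bullet> normal \<le> 10 * \<epsilon> * image_gap"
proof -
  have "w \<in> ball x0 r" using preimage_near_x0[OF assms(1)] s by (simp add: dist_commute)
  moreover have "dist w ray_in \<le> dist w ray_out"
    using dist_inner_ray_point_le[OF x0 assms(2)] s by (simp add: ray_out_def ray_in_def)
  ultimately have "dist (f w) (f ray_in) \<le> (1 + \<epsilon>) * dist (f w) (f ray_out)"
    using ray_points_in_ball by (intro weakly_qs_onD[OF qs])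
  then show ?thesis
    using assms \<epsilon> dist_image_x0_le(1) unfolding normal_def image_midpoint_def image_gap_def
    by (intro almost_closer_imp_inner_sgn_le[where p="f x0" and \<eta>=0]) (simp_all add: dist_commute)
qed

lemma image_outside_halfspace:
  assumes "dist (f w) (f x0) \<le> 2 * image_gap" "1 \<le> norm w"
  shows "- ((f w - image_midpoint) \<bullet> normal) \<le> 10 * \<epsilon> * image_gap"
proof -
  define \<eta> where "\<eta> = (1 + \<epsilon>) * (\<epsilon> / 8 * image_gap)"
  have "w \<in> ball x0 r" using preimage_near_x0[OF assms(1)] s by (simp add: dist_commute)
  moreover have "dist w ray_out \<le> dist w ray_in'"
    using dist_outer_ray_point_le[OF x0 assms(2)] preimage_near_x0[OF assms(1)] s
    by (simp add: ray_out_def ray_in'_def)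
  ultimately have "dist (f w) (f ray_out) \<le> (1 + \<epsilon>) * dist (f w) (f ray_in')"
    using ray_points_in_ball by (intro weakly_qs_onD[OF qs])
  also have "\<dots> \<le> (1 + \<epsilon>) * (dist (f w) (f ray_in) + \<epsilon> / 8 * image_gap)"
    using dist_triangle[of "f w" "f ray_in'" "f ray_in"] dist_image_ray_in'_le \<epsilon>
    by (intro mult_left_mono) simp_all
  finally have "dist (f w) (f ray_out) \<le> (1 + \<epsilon>) * dist (f w) (f ray_in) + \<eta>"
    by (simp only: \<eta>_def distrib_left)
  moreover have "0 \<le> \<eta>" "\<eta> \<le> \<epsilon> * image_gap / 7"
    using \<epsilon> image_gap_pos by (simp_all add: \<eta>_def field_simps)
  ultimately have "(f w - midpoint (f ray_in) (f ray_out)) \<bullet> sgn (f ray_in - f ray_out)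
      \<le> 10 * \<epsilon> * image_gap"
    using assms \<epsilon> dist_image_x0_le(2) unfolding image_gap_def dist_commute[of "f ray_out"]
    by (intro almost_closer_imp_inner_sgn_le[where p="f x0"]) (simp_all add: dist_commute)
  moreover have "sgn (f ray_in - f ray_out) = - normal"
    by (metis normal_def minus_diff_eq sgn_minus)
  ultimately show ?thesis by (simp add: image_midpoint_def midpoint_sym)
qed

lemma image_sphere_flat:
  "hausdorff_dist (f ` sphere 0 1 \<inter> cball (f x0) image_gap)
     ({q. normal \<bullet> (q - f x0) = 0} \<inter> cball (f x0) image_gap) \<le> 40 * \<epsilon> * image_gap"
proof -
  have shift: "normal \<bullet> (f w - f x0) = (f w - image_midpoint) \<bullet> normal - (f x0 - image_midpoint) \<bullet> normal" for w
    by (simp add: inner_commute inner_diff_right)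
  have image_x0_level: "\<bar>(f x0 - image_midpoint) \<bullet> normal\<bar> \<le> 10 * \<epsilon> * image_gap"
    using image_inside_halfspace[of x0] image_outside_halfspace[of x0] x0 image_gap_pos
    by (simp add: abs_le_iff)
  have "hausdorff_dist (f ` sphere 0 1 \<inter> cball (f x0) image_gap)
      ({q. normal \<bullet> (q - f x0) = 0} \<inter> cball (f x0) image_gap) \<le> ((21 * \<epsilon>)^2 + 21 * \<epsilon>) * image_gap"
  proof (rule hausdorff_dist_image_sphere_hyperplane_le[OF hom x0 normal_unit image_gap_pos,
        where c="20 * \<epsilon> * image_gap"])
    show "0 \<le> 21 * \<epsilon>" "21 * \<epsilon> \<le> 1" "20 * \<epsilon> * image_gap < 21 * \<epsilon> * image_gap"
      using \<epsilon> image_gap_pos by simp_all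
    show "normal \<bullet> (f w - f x0) \<le> 20 * \<epsilon> * image_gap"
      if "dist (f w) (f x0) \<le> 2 * image_gap" "norm w \<le> 1" for w
      using image_inside_halfspace[OF that] image_x0_level shift[of w] by linarith
    show "- (20 * \<epsilon> * image_gap) \<le> normal \<bullet> (f w - f x0)"
      if "dist (f w) (f x0) \<le> 2 * image_gap" "1 \<le> norm w" for w
      using image_outside_halfspace[OF that] image_x0_level shift[of w] by linarith
  qed
  also have "\<dots> \<le> 40 * \<epsilon> * image_gap"
    using \<epsilon> image_gap_pos by (simp add: power2_eq_square field_simps)
  finally show ?thesis .
qed

end

lemma sphere_pair_image_dist_bounded_below:
  fixes f :: "'a::euclidean_space \<Rightarrow> 'b::metric_space"
  assumes "continuous_on UNIV f" "inj f" "0 < s"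
  obtains R where "0 < R" "\<And>x0. x0 \<in> sphere 0 1 \<Longrightarrow> R \<le> dist (f ((1 + s) *\<^sub>R x0)) (f ((1 - s) *\<^sub>R x0))"
proof -
  define \<phi> where "\<phi> x0 = dist (f ((1 + s) *\<^sub>R x0)) (f ((1 - s) *\<^sub>R x0))" for x0 :: 'a
  have "continuous_on S (\<lambda>x. f (c *\<^sub>R x))" for S c
    by (rule continuous_on_compose2[OF assms(1)]) (auto intro: continuous_intros)
  then have "continuous_on (sphere 0 1) \<phi>"
    unfolding \<phi>_def by (intro continuous_on_dist)
  moreover have "sphere (0::'a) 1 \<noteq> {}" by simp
  ultimately obtain x where x: "x \<in> sphere 0 1" "\<And>y. y \<in> sphere 0 1 \<Longrightarrow> \<phi> x \<le> \<phi> y"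
    using continuous_attains_inf[OF compact_sphere] by blast
  have "(1 + s) *\<^sub>R x \<noteq> (1 - s) *\<^sub>R x"
    using x(1) \<open>0 < s\<close> by (auto simp: scaleR_cancel_right)
  then have "0 < \<phi> x" using \<open>inj f\<close> by (simp add: \<phi>_def inj_eq)
  with x show thesis by (intro that[of "\<phi> x"]) (auto simp: \<phi>_def)
qed

lemma weakly_qs_sphere_image_theta_le:
  fixes f :: "real ^ 'n \<Rightarrow> real ^ 'n"
  assumes hom: "homeomorphism UNIV UNIV f g"
    and qs: "\<And>z. z \<in> sphere 0 1 \<Longrightarrow> weakly_qs_on f (ball z r) (1 + \<epsilon>)" and \<epsilon>: "0 < \<epsilon>" "\<epsilon> \<le> 1/40"
    and s0: "0 < s0" "16 * s0 \<le> r" "2^k * 32 * s0 \<le> 1"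
    and k: "1 + \<epsilon> \<le> \<epsilon> / 8 * (1/(1 + \<epsilon>) + 1/(1 + \<epsilon>)^2)^k"
    and x0: "x0 \<in> sphere 0 1" and t: "0 < t" "t \<le> dist (f ((1 + s0) *\<^sub>R x0)) (f ((1 - s0) *\<^sub>R x0))"
  shows "theta (f ` sphere 0 1) (f x0) t \<le> 40 * \<epsilon>"
proof -
  define \<psi> where "\<psi> s = dist (f ((1 + s) *\<^sub>R x0)) (f ((1 - s) *\<^sub>R x0))" for s
  have "continuous_on UNIV f" using hom by (simp add: homeomorphism_def)
  then have "continuous_on {0..s0} \<psi>"
    unfolding \<psi>_def by (intro continuous_on_dist; rule continuous_on_compose2[of UNIV f])
      (auto intro!: continuous_intros)
  moreover have "\<psi> 0 \<le> t" "t \<le> \<psi> s0" using t by (simp_all add: \<psi>_def)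
  ultimately obtain s where "0 \<le> s" "s \<le> s0" and gap: "\<psi> s = t"
    using IVT'[of \<psi> 0 t s0] s0(1) by auto
  have "s \<noteq> 0" using gap t(1) by (auto simp: \<psi>_def)
  have "2^k * 32 * s \<le> 2^k * 32 * s0" using \<open>s \<le> s0\<close> by simp
  then have "2^k * 32 * s \<le> 1" using s0(3) by linarith
  then interpret weakly_qs_sphere_scale f g x0 r \<epsilon> s k
    using hom x0 qs[OF x0] \<epsilon> \<open>0 \<le> s\<close> \<open>s \<le> s0\<close> s0 k \<open>s \<noteq> 0\<close> by unfold_locales auto
  have "t = image_gap" using gap by (simp add: \<psi>_def image_gap_def ray_out_def ray_in_def)
  with image_sphere_flat have "hausdorff_dist (f ` sphere 0 1 \<inter> cball (f x0) t)
      ({q. normal \<bullet> (q - f x0) = 0} \<inter> cball (f x0) t) \<le> 40 * \<epsilon> * t"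
    by simp
  then show ?thesis
    using x0 t(1) normal_unit by (intro theta_le_if_near_hyperplane[where N=normal]) auto
qed

theorem corollary2p6:
  fixes f :: "real ^ 'n \<Rightarrow> real ^ 'n" and \<delta> r :: real
  assumes "CARD('n) \<ge> 2"
    and "0 < \<delta>" and "\<delta> < 1"
    and "quasiconformal f"
    and "0 < r"
    and "(SUP z \<in> sphere 0 1. H_tilde f (ball z r)) \<le> ereal (\<delta> / 40)"
  shows "\<exists>R > 0. reifenberg_flat \<delta> R (f ` sphere 0 1)"
proof -
  obtain g where hom: "homeomorphism UNIV UNIV f g" using assms(4) by (auto simp: quasiconformal_def)
  then have "inj f" "continuous_on UNIV f"
    unfolding homeomorphism_def by (metis UNIV_I inj_on_inverseI, blast)
  define \<epsilon> where "\<epsilon> = \<delta> / 40"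
  have \<epsilon>: "0 < \<epsilon>" "\<epsilon> \<le> 1/40" using assms(2,3) by (simp_all add: \<epsilon>_def)
  have qs: "weakly_qs_on f (ball z r) (1 + \<epsilon>)" if "z \<in> sphere 0 1" for z
    using SUP_upper[OF that, of "\<lambda>z. H_tilde f (ball z r)"] assms(6)
    by (intro H_tilde_le_imp_weakly_qs_on[OF \<open>inj f\<close>]) (simp add: \<epsilon>_def)
  obtain k where k: "1 + \<epsilon> \<le> \<epsilon> / 8 * (1/(1 + \<epsilon>) + 1/(1 + \<epsilon>)^2)^k"
    using doubling_factor_power_large[OF \<epsilon>] by blast
  define s0 where "s0 = min (r / 16) (1 / (2^k * 32))"
  have s0: "0 < s0" "16 * s0 \<le> r" "2^k * 32 * s0 \<le> 1"
    using assms(5) by (auto simp: s0_def min_def field_simps)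
  obtain R where "0 < R" and R: "\<And>x0. x0 \<in> sphere 0 1 \<Longrightarrow> R \<le> dist (f ((1 + s0) *\<^sub>R x0)) (f ((1 - s0) *\<^sub>R x0))"
    using sphere_pair_image_dist_bounded_below[OF \<open>continuous_on UNIV f\<close> \<open>inj f\<close> s0(1)] by blast
  have "closed (f ` sphere 0 1)"
    by (intro compact_imp_closed compact_continuous_image continuous_on_subset[OF \<open>continuous_on UNIV f\<close>]) auto
  moreover have "theta (f ` sphere 0 1) (f x0) t \<le> \<delta>" if "x0 \<in> sphere 0 1" "0 < t" "t \<le> R" for x0 t
    using weakly_qs_sphere_image_theta_le[OF hom qs \<epsilon> s0 k that(1,2)] R[OF that(1)] that(3)
    by (simp add: \<epsilon>_def)
  ultimately show ?thesis using \<open>0 < R\<close> unfolding reifenberg_flat_def by blast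
qed

end
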